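(* Let $p$ be a prime and $A_*$ a graded commutative $\mathbb F_p$-algebra. Then $[G_p(A_* ),G_p(A_* )]\subset G_p^{(0.5)}(A_* )$; $[G_p^{(0.5)}(A_* ),G_p^{(0.5)}(A_* )]\subset G_p^{(2)}(A_* )$; $[G_p^{(k)}(A_* ),G_p^{(k)}(A_* )]\subset G_p^{(k+2)}(A_* )$ for every positive integer $k$; $[G_p^{(k)}(A_* ),G_p(A_* )]\subset G_p^{(k+0.5)}(A_* )$ for every non-negative integer $k$; $[G_p^{(k+0.5)}(A_* ),G_p(A_* )]\subset G_p^{(k+1.5)}(A_* )$ for every non-negative integer $k$.
   Context: Graded commutative means $ab=(-1)^{\deg a\deg b}ba$. If $p=2$, $G_2(A_* )$ is the set of power series $\alpha(X)=\sum_{i\ge0}\alpha_iX^{2^i}\in A_*[[X]]$ ($X$ of degree $-1$) with $\alpha_i\in A_{2^i-1}$ and $\alpha_0=1$; in this case put $\epsilon=0$. If $p$ is odd, let $\epsilon$ have degree $-1$ with $\epsilon^2=0$, $X$ degree $-2$, and $G_p(A_* )$ is the set of $\alpha(X)=\sum_{i\ge0}\alpha_iX^{p^i}\in (A_*\otimes_{\mathbb F_p}\mathbb F_p[\epsilon]/(\epsilon^2))[[X]]$ with $\alpha_i$ homogeneous of degree $2(p^i-1)$ and $\alpha_0-1\in(\epsilon)$. The group law is $\alpha(X)\cdot\beta(X)=\beta(\alpha(X))$ (coefficient of $X^{p^i}$ equal to $\sum_{j=0}^i\alpha_{i-j}^{p^j}\beta_j$); the identity is $X$. For an integer $k\ge0$,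 $G_p^{(k)}(A_* )$ is the subgroup of elements of the form $X+\sum_{i\ge k+1}\alpha_iX^{p^i}$, and $G_p^{(k+0.5)}(A_* )$ the subgroup of elements of the form $X+\sum_{i\ge k+1}\alpha_iX^{p^i}$ with $\alpha_{k+1}\in(\epsilon)$. $[H,K]$ denotes the subgroup generated by commutators $h^{-1}k^{-1}hk$. *)

theory Defs
  imports "HOL-Algebra.Generated_Groups" "HOL-Computational_Algebra.Primes"
begin

text \<open>A graded commutative F_p-algebra structure on the ring type 'a:
  A n is the degree-n part (n :: int); 'a is the direct sum of the A n.\<close>
definition graded_comm_Fp_alg :: "nat \<Rightarrow> (int \<Rightarrow> 'a::ring_1 set) \<Rightarrow> bool" where
  "graded_comm_Fp_alg p A \<longleftrightarrow>
     (\<forall>n. 0 \<in> A n \<and> (\<forall>x\<in>A n. \<forall>y\<in>A n. x + y \<in> A n) \<and> (\<forall>x\<in>A n. - x \<in> A n)) \<and>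
     1 \<in> A 0 \<and>
     (\<forall>m n. \<forall>x\<in>A m. \<forall>y\<in>A n. x * y \<in> A (m + n)) \<and>
     (\<forall>x. \<exists>F f. finite F \<and> (\<forall>n\<in>F. f n \<in> A n) \<and> x = sum f F) \<and>
     (\<forall>F f. finite F \<longrightarrow> (\<forall>n\<in>F. f n \<in> A n) \<longrightarrow> sum f F = 0 \<longrightarrow> (\<forall>n\<in>F. f n = 0)) \<and>
     (\<forall>m n. \<forall>x\<in>A m. \<forall>y\<in>A n. x * y = (if even (m * n) then y * x else - (y * x))) \<and>
     of_nat p = (0::'a)"

text \<open>Degree of the coefficient alpha_i.\<close>
definition hdeg :: "nat \<Rightarrow> nat \<Rightarrow> int" where
  "hdeg p i = (if p = 2 then (2::int) ^ i - 1 else 2 * (int p ^ i - 1))"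

text \<open>Elements of A_* tensor F_p[eps]/(eps^2) are pairs (a,b) meaning a + b eps
  (i.e. a\<otimes>1 + b\<otimes>eps), eps of degree -1; for p = 2, eps = 0, i.e. b = 0.
  Homogeneity of degree d: a \<in> A d, b \<in> A (d+1).\<close>
definition ext_hom :: "nat \<Rightarrow> (int \<Rightarrow> 'a::ring_1 set) \<Rightarrow> int \<Rightarrow> 'a \<times> 'a \<Rightarrow> bool" where
  "ext_hom p A d x \<longleftrightarrow> fst x \<in> A d \<and> (if p = 2 then snd x = 0 else snd x \<in> A (d + 1))"

text \<open>Product (a + b eps)(c + d eps) = ac + (ad + (-1)^e bc) eps (Koszul sign rule),
  where e is the degree of the homogeneous right factor (c \<in> A e).\<close>
definition eps_mult :: "int \<Rightarrow> 'a::ring_1 \<times> 'a \<Rightarrow> 'a \<times> 'a \<Rightarrow> 'a \<times> 'a" where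
  "eps_mult e x y = (fst x * fst y,
      fst x * snd y + (if even e then snd x * fst y else - (snd x * fst y)))"

fun eps_pow :: "int \<Rightarrow> 'a::ring_1 \<times> 'a \<Rightarrow> nat \<Rightarrow> 'a \<times> 'a" where
  "eps_pow e x 0 = (1, 0)"
| "eps_pow e x (Suc n) = eps_mult e (eps_pow e x n) x"

text \<open>Power series alpha(X) = sum_i alpha_i X^(p^i) represented by coefficient sequences.\<close>
definition Gcarrier :: "nat \<Rightarrow> (int \<Rightarrow> 'a::ring_1 set) \<Rightarrow> (nat \<Rightarrow> 'a \<times> 'a) set" where
  "Gcarrier p A = {\<alpha>. (\<forall>i. ext_hom p A (hdeg p i) (\<alpha> i)) \<and> fst (\<alpha> 0) = 1}"

text \<open>Group law alpha . beta = beta(alpha(X)):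
  coefficient i is sum_{j=0..i} alpha_(i-j)^(p^j) beta_j.\<close>
definition Gmult :: "nat \<Rightarrow> (nat \<Rightarrow> 'a::ring_1 \<times> 'a) \<Rightarrow> (nat \<Rightarrow> 'a \<times> 'a) \<Rightarrow> (nat \<Rightarrow> 'a \<times> 'a)" where
  "Gmult p \<alpha> \<beta> = (\<lambda>i.
     let t = (\<lambda>j. eps_mult (hdeg p j) (eps_pow (hdeg p (i - j)) (\<alpha> (i - j)) (p ^ j)) (\<beta> j))
     in ((\<Sum>j\<le>i. fst (t j)), (\<Sum>j\<le>i. snd (t j))))"

definition Gone :: "nat \<Rightarrow> 'a::ring_1 \<times> 'a" where
  "Gone = (\<lambda>i. if i = 0 then (1, 0) else (0, 0))"

definition Gp :: "nat \<Rightarrow> (int \<Rightarrow> 'a::ring_1 set) \<Rightarrow> (nat \<Rightarrow> 'a \<times> 'a) monoid" where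
  "Gp p A = \<lparr>carrier = Gcarrier p A, monoid.mult = Gmult p, one = Gone\<rparr>"

text \<open>G_p^(k): elements X + sum_{i \<ge> k+1} alpha_i X^(p^i).\<close>
definition Gsub :: "nat \<Rightarrow> (int \<Rightarrow> 'a::ring_1 set) \<Rightarrow> nat \<Rightarrow> (nat \<Rightarrow> 'a \<times> 'a) set" where
  "Gsub p A k = {\<alpha> \<in> Gcarrier p A. \<alpha> 0 = (1, 0) \<and> (\<forall>i. 1 \<le> i \<and> i \<le> k \<longrightarrow> \<alpha> i = (0, 0))}"

text \<open>G_p^(k+0.5): additionally alpha_(k+1) \<in> (eps).\<close>
definition Gsub_half :: "nat \<Rightarrow> (int \<Rightarrow> 'a::ring_1 set) \<Rightarrow> nat \<Rightarrow> (nat \<Rightarrow> 'a \<times> 'a) set" where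
  "Gsub_half p A k = {\<alpha> \<in> Gsub p A k. fst (\<alpha> (k + 1)) = 0}"

definition comm_subgroup :: "('b, 'c) monoid_scheme \<Rightarrow> 'b set \<Rightarrow> 'b set \<Rightarrow> 'b set" where
  "comm_subgroup G H K = generate G
     {inv\<^bsub>G\<^esub> h \<otimes>\<^bsub>G\<^esub> inv\<^bsub>G\<^esub> k \<otimes>\<^bsub>G\<^esub> h \<otimes>\<^bsub>G\<^esub> k | h k. h \<in> H \<and> k \<in> K}"

end

theory Submission
  imports Defs
begin

text \<open>All coefficients \<open>\<alpha>_i\<close> have even degree (or \<open>p = 2\<close>), so their \<open>\<epsilon>\<close>-free parts are central,
  the Koszul sign in the group law never occurs, and the coefficients may be computed in the
  commutative ring of dual numbers over the centre of \<open>A_*\<close>, which has characteristic \<open>p\<close>. There the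
  group law reads \<open>(\<alpha>\<beta>)_i = \<Sum>_j \<alpha>_(i-j)^(p^j) \<beta>_j\<close> and is associative by the Frobenius.
  If the coefficients of \<open>\<alpha>\<close> and \<open>\<beta>\<close> agree up to index \<open>k\<close>, then \<open>\<alpha>\<inverse>\<beta> \<in> G^(k)\<close>, and even
  \<open>\<alpha>\<inverse>\<beta> \<in> G^(k+0.5)\<close> if their \<open>\<epsilon>\<close>-free parts also agree at \<open>k + 1\<close>. As \<open>h\<inverse>g\<inverse>hg = (gh)\<inverse>(hg)\<close>,
  every inclusion reduces to comparing the coefficients of \<open>hg\<close> and \<open>gh\<close>. For \<open>h_0 = 1\<close> their
  difference at \<open>i\<close> is \<open>h_i (g_0 - 1) + \<Sum>_(0<j<i) (h_(i-j)^(p^j) g_j - g_(i-j)^(p^j) h_j)\<close>, using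
  \<open>(1 + b\<epsilon>)^(p^i) = 1\<close>; each term vanishes, or lies in \<open>(\<epsilon>)\<close>, because the low coefficients vanish
  and \<open>\<epsilon>\<^sup>2 = 0\<close>.\<close>

section \<open>Dual numbers over the centre\<close>

definition central :: "'a::ring_1 \<Rightarrow> bool" where
  "central a \<longleftrightarrow> (\<forall>y. a * y = y * a)"

lemma central_0 [simp]: "central 0" and central_1 [simp]: "central 1"
  by (simp_all add: central_def)

lemma central_add: "central a \<Longrightarrow> central b \<Longrightarrow> central (a + b)"
  and central_uminus: "central a \<Longrightarrow> central (- a)"
  and central_diff: "central a \<Longrightarrow> central b \<Longrightarrow> central (a - b)"
  by (simp_all add: central_def algebra_simps)

lemma central_mult: "central a \<Longrightarrow> central b \<Longrightarrow> central (a * b)"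
  unfolding central_def by (metis mult.assoc)

text \<open>Dual numbers \<open>a + b \<epsilon>\<close> over a possibly non-commutative ring: requiring only \<open>a\<close> to be
  central already makes the product commutative, because \<open>\<epsilon>\<^sup>2 = 0\<close>.\<close>
typedef (overloaded) ('a::ring_1) dual_num = "{x :: 'a \<times> 'a. central (fst x)}"
  morphisms dual_pair Dual
  by (rule exI[of _ "(0, 0)"]) simp

definition dual_re :: "'a::ring_1 dual_num \<Rightarrow> 'a" where
  "dual_re x = fst (dual_pair x)"

lemma central_dual_re: "central (dual_re x)"
  using dual_pair[of x] by (simp add: dual_re_def)

lemma dual_pair_Dual: "central (fst x) \<Longrightarrow> dual_pair (Dual x) = x"
  by (simp add: Dual_inverse)

instantiation dual_num :: (ring_1) comm_ring_1
begin

definition "0 = Dual (0, 0)"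
definition "1 = Dual (1, 0)"
definition "x + y =
  Dual (fst (dual_pair x) + fst (dual_pair y), snd (dual_pair x) + snd (dual_pair y))"
definition "- x = Dual (- fst (dual_pair x), - snd (dual_pair x))"
definition "x - y =
  Dual (fst (dual_pair x) - fst (dual_pair y), snd (dual_pair x) - snd (dual_pair y))"
definition "x * y = Dual (dual_re x * dual_re y,
   dual_re x * snd (dual_pair y) + snd (dual_pair x) * dual_re y)"

lemma dual_pair_0: "dual_pair (0 :: 'a dual_num) = (0, 0)"
  and dual_pair_1: "dual_pair (1 :: 'a dual_num) = (1, 0)"
  and dual_pair_add:
    "dual_pair (x + y) = (fst (dual_pair x) + fst (dual_pair y), snd (dual_pair x) + snd (dual_pair y))"
  and dual_pair_uminus: "dual_pair (- x) = (- fst (dual_pair x), - snd (dual_pair x))"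
  and dual_pair_diff:
    "dual_pair (x - y) = (fst (dual_pair x) - fst (dual_pair y), snd (dual_pair x) - snd (dual_pair y))"
  and dual_pair_mult: "dual_pair (x * y) = (dual_re x * dual_re y,
     dual_re x * snd (dual_pair y) + snd (dual_pair x) * dual_re y)"
  using central_dual_re[of x] central_dual_re[of y]
  by (simp_all add: zero_dual_num_def one_dual_num_def plus_dual_num_def uminus_dual_num_def
      minus_dual_num_def times_dual_num_def dual_pair_Dual central_add central_uminus
      central_diff central_mult dual_re_def)

lemmas dual_pair_simps = dual_pair_0 dual_pair_1 dual_pair_add dual_pair_uminus dual_pair_diff
  dual_pair_mult

instance
proof
  fix a b c :: "'a dual_num"
  have "dual_re a * y = y * dual_re a" "dual_re b * y = y * dual_re b" for y
    using central_dual_re[of a] central_dual_re[of b] by (simp_all add: central_def)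
  then show "a * b = b * a"
    unfolding dual_pair_inject[symmetric] dual_pair_mult prod_eq_iff fst_conv snd_conv
    by (metis add.commute)
  show "1 * a = a"
    by (simp add: dual_pair_inject[symmetric] dual_pair_simps dual_re_def)
  show "(a + b) * c = a * c + b * c"
    by (simp add: dual_pair_inject[symmetric] dual_pair_simps dual_re_def algebra_simps)
  show "a * b * c = a * (b * c)"
    by (simp add: dual_pair_inject[symmetric] dual_pair_mult dual_re_def distrib_left distrib_right
        mult.assoc add.assoc)
  show "a + b + c = a + (b + c)" "a + b = b + a" "0 + a = a" "- a + a = 0" "a - b = a + - b"
    by (simp_all add: dual_pair_inject[symmetric] dual_pair_simps algebra_simps)
  show "(0 :: 'a dual_num) \<noteq> 1"
    by (simp add: dual_pair_inject[symmetric] dual_pair_simps)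
qed

end

lemma dual_re_0 [simp]: "dual_re 0 = 0"
  and dual_re_1 [simp]: "dual_re 1 = 1"
  and dual_re_add [simp]: "dual_re (x + y) = dual_re x + dual_re y"
  and dual_re_uminus [simp]: "dual_re (- x) = - dual_re x"
  and dual_re_diff [simp]: "dual_re (x - y) = dual_re x - dual_re y"
  and dual_re_mult [simp]: "dual_re (x * y) = dual_re x * dual_re y"
  by (simp_all add: dual_re_def dual_pair_simps)

lemma dual_re_power [simp]: "dual_re (x ^ n) = dual_re x ^ n"
  by (induction n) simp_all

lemma dual_re_sum [simp]: "dual_re (sum f S) = (\<Sum>i\<in>S. dual_re (f i))"
  by (induction S rule: infinite_finite_induct) simp_all

lemma dual_pair_sum:
  "dual_pair (sum f S) = (\<Sum>i\<in>S. fst (dual_pair (f i)), \<Sum>i\<in>S. snd (dual_pair (f i)))"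
  by (induction S rule: infinite_finite_induct) (simp_all add: dual_pair_simps)

lemma dual_pair_of_nat: "dual_pair (of_nat n :: 'a::ring_1 dual_num) = (of_nat n, 0)"
  by (induction n) (simp_all add: dual_pair_simps)

lemma CHAR_dual_num [simp]: "CHAR('a::ring_1 dual_num) = CHAR('a)"
  by (rule CHAR_eqI)
    (simp_all add: dual_pair_inject[symmetric] dual_pair_of_nat dual_pair_0 of_nat_eq_0_iff_char_dvd)

lemma CHAR_eq_prime: "prime p \<Longrightarrow> of_nat p = (0 :: 'a::ring_1) \<Longrightarrow> CHAR('a) = p"
  by (metis CHAR_not_1 One_nat_def of_nat_eq_0_iff_char_dvd prime_nat_iff)

lemma dual_re_eq_0_mult: "dual_re x = 0 \<Longrightarrow> dual_re y = 0 \<Longrightarrow> x * y = 0"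
  by (simp add: dual_pair_inject[symmetric] dual_pair_simps)

lemma dual_re_eq_0_power: "dual_re x = 0 \<Longrightarrow> 2 \<le> n \<Longrightarrow> x ^ n = 0"
  by (metis dual_re_eq_0_mult le_add_diff_inverse mult_zero_left power2_eq_square power_add)

lemma dual_power_of_re_1:
  assumes "dual_re x = 1"
  shows "x ^ n = 1 + of_nat n * (x - 1)"
proof -
  define e where "e = x - 1"
  have e2: "e * e = 0"
    using assms by (intro dual_re_eq_0_mult) (simp_all add: e_def)
  have "(1 + e) ^ n = 1 + of_nat n * e"
  proof (induction n)
    case (Suc n)
    have "(1 + e) ^ Suc n = 1 + of_nat n * e + e + of_nat n * (e * e)"
      by (simp add: Suc algebra_simps)
    then show ?case
      by (simp add: e2 algebra_simps)
  qed simp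
  then show ?thesis
    by (simp add: e_def)
qed

lemma dual_power_char_eq_1:
  fixes x :: "'a::ring_1 dual_num"
  assumes "dual_re x = 1" and "of_nat p = (0 :: 'a)" and "0 < i"
  shows "x ^ p ^ i = 1"
proof -
  have "of_nat p = (0 :: 'a dual_num)"
    using assms(2) by (simp add: of_nat_eq_0_iff_char_dvd)
  then have "of_nat (p ^ i) = (0 :: 'a dual_num)"
    using assms(3) by (simp add: of_nat_power zero_power)
  then show ?thesis
    using dual_power_of_re_1[OF assms(1), of "p ^ i"] by simp
qed

lemma dual_unit_of_re_1:
  fixes x :: "'a::ring_1 dual_num"
  assumes "prime p" and "of_nat p = (0 :: 'a)" and "dual_re x = 1"
  shows "x ^ (p - 1) * x = 1"
  using dual_power_char_eq_1[OF assms(3,2), of 1] prime_gt_0_nat[OF assms(1)]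
  by (simp flip: power_Suc2)

section \<open>Composition of additive power series\<close>

text \<open>Coefficients of \<open>\<beta>(\<alpha>(X))\<close> for \<open>\<alpha> = \<Sum> a_i X^(p^i)\<close> and \<open>\<beta> = \<Sum> b_i X^(p^i)\<close> over a
  commutative ring of characteristic \<open>p\<close>.\<close>
definition pcomp :: "nat \<Rightarrow> (nat \<Rightarrow> 'b::comm_ring_1) \<Rightarrow> (nat \<Rightarrow> 'b) \<Rightarrow> nat \<Rightarrow> 'b" where
  "pcomp p a b i = (\<Sum>j\<le>i. a (i - j) ^ p ^ j * b j)"

definition pcomp_one :: "nat \<Rightarrow> 'b::comm_ring_1" where
  "pcomp_one i = (if i = 0 then 1 else 0)"

lemma pcomp_0 [simp]: "pcomp p a b 0 = a 0 * b 0"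
  by (simp add: pcomp_def)

lemma pcomp_split:
  assumes "0 < i"
  shows "pcomp p a b i = a i * b 0 + (\<Sum>j\<in>{1..<i}. a (i - j) ^ p ^ j * b j) + a 0 ^ p ^ i * b i"
proof -
  have "{..i} = insert 0 (insert i {1..<i})"
    using assms by auto
  then show ?thesis
    using assms by (simp add: pcomp_def add_ac)
qed

lemma pcomp_assoc:
  fixes a b c :: "nat \<Rightarrow> 'b::comm_ring_1"
  assumes "prime p" and "CHAR('b) = p"
  shows "pcomp p (pcomp p a b) c = pcomp p a (pcomp p b c)"
proof
  fix n
  define g where "g i k = a (n - (i + k)) ^ p ^ (i + k) * b k ^ p ^ i * c i" for i k
  have "pcomp p (pcomp p a b) c n = (\<Sum>i\<le>n. \<Sum>k\<le>n - i. g i k)"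
    unfolding pcomp_def
  proof (rule sum.cong [OF refl])
    fix i
    have "(\<Sum>k\<le>n - i. a (n - i - k) ^ p ^ k * b k) ^ p ^ i
        = (\<Sum>k\<le>n - i. (a (n - i - k) ^ p ^ k * b k) ^ p ^ i)"
      using assms by (intro freshmans_dream_sum') simp_all
    also have "\<dots> = (\<Sum>k\<le>n - i. a (n - (i + k)) ^ p ^ (i + k) * b k ^ p ^ i)"
      by (intro sum.cong refl) (simp add: power_mult_distrib power_add mult.commute flip: power_mult)
    finally show "(\<Sum>k\<le>n - i. a (n - i - k) ^ p ^ k * b k) ^ p ^ i * c i = (\<Sum>k\<le>n - i. g i k)"
      by (simp add: g_def sum_distrib_right)
  qed
  also have "\<dots> = (\<Sum>(i, k)\<in>{(i, k). i + k \<le> n}. g i k)"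
    by (simp add: sum.Sigma Sigma_def) (rule sum.cong; auto)
  also have "\<dots> = (\<Sum>m\<le>n. \<Sum>i\<le>m. g i (m - i))"
    by (rule sum.triangle_reindex_eq)
  also have "\<dots> = pcomp p a (pcomp p b c) n"
    unfolding pcomp_def sum_distrib_left
    by (intro sum.cong refl) (simp add: g_def mult.assoc)
  finally show "pcomp p (pcomp p a b) c n = pcomp p a (pcomp p b c) n" .
qed

lemma pcomp_one_left: "0 < p \<Longrightarrow> pcomp p pcomp_one b = b"
proof
  fix i
  assume "0 < p"
  then have "pcomp p pcomp_one b i = (\<Sum>j\<in>{i}. pcomp_one (i - j) ^ p ^ j * b j)"
    unfolding pcomp_def by (intro sum.mono_neutral_right) (auto simp: pcomp_one_def power_0_left)
  then show "pcomp p pcomp_one b i = b i"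
    by (simp add: pcomp_one_def)
qed

fun pcomp_linv :: "nat \<Rightarrow> 'b::comm_ring_1 \<Rightarrow> (nat \<Rightarrow> 'b) \<Rightarrow> nat \<Rightarrow> 'b" where
  "pcomp_linv p u a 0 = u"
| "pcomp_linv p u a (Suc n) =
     - (\<Sum>j\<in>{1..Suc n}. pcomp_linv p u a (Suc n - j) ^ p ^ j * a j) * u"

lemma pcomp_pcomp_linv:
  assumes "u * a 0 = 1"
  shows "pcomp p (pcomp_linv p u a) a = pcomp_one"
proof
  fix i
  show "pcomp p (pcomp_linv p u a) a i = pcomp_one i"
  proof (cases i)
    case (Suc n)
    have "{..i} = insert 0 {1..i}"
      using Suc by auto
    then have "pcomp p (pcomp_linv p u a) a i
        = pcomp_linv p u a i * a 0 + (\<Sum>j\<in>{1..i}. pcomp_linv p u a (i - j) ^ p ^ j * a j)"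
      by (simp add: pcomp_def)
    also have "\<dots> = 0"
      using assms Suc by (simp add: mult.assoc)
    finally show ?thesis
      using Suc by (simp add: pcomp_one_def)
  qed (use assms in \<open>simp add: pcomp_one_def mult.commute\<close>)
qed

section \<open>Comparing the coefficients of \<open>h g\<close> and \<open>g h\<close>\<close>

lemma pcomp_commute_0: "pcomp p a b 0 = pcomp p b a 0"
  by (simp add: mult.commute)

lemma pcomp_diff_commute:
  fixes h g :: "nat \<Rightarrow> 'a::ring_1 dual_num"
  assumes "of_nat p = (0 :: 'a)" and "0 < i" and "h 0 = 1" and "dual_re (g 0) = 1"
  shows "pcomp p h g i - pcomp p g h i = h i * (g 0 - 1)
    + (\<Sum>j\<in>{1..<i}. h (i - j) ^ p ^ j * g j) - (\<Sum>j\<in>{1..<i}. g (i - j) ^ p ^ j * h j)"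
  using pcomp_split[OF \<open>0 < i\<close>, of p h g] pcomp_split[OF \<open>0 < i\<close>, of p g h]
    dual_power_char_eq_1[OF assms(4,1,2)] \<open>h 0 = 1\<close>
  by (simp add: algebra_simps)

lemma pcomp_commuteI:
  fixes h g :: "nat \<Rightarrow> 'a::ring_1 dual_num"
  assumes "prime p" and "of_nat p = (0 :: 'a)" and "0 < i" and "h 0 = 1" and "dual_re (g 0) = 1"
    and "h i * (g 0 - 1) = 0"
    and "\<And>j. 1 \<le> j \<Longrightarrow> j < i \<Longrightarrow> dual_re (h (i - j)) = 0 \<or> g j = 0"
    and "\<And>j. 1 \<le> j \<Longrightarrow> j < i \<Longrightarrow> dual_re (g (i - j)) = 0 \<or> h j = 0"
  shows "pcomp p h g i = pcomp p g h i"
proof -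
  have middle_eq_0: "(\<Sum>j\<in>{1..<i}. a (i - j) ^ p ^ j * b j) = 0"
    if "\<And>j. 1 \<le> j \<Longrightarrow> j < i \<Longrightarrow> dual_re (a (i - j)) = 0 \<or> b j = 0"
    for a b :: "nat \<Rightarrow> 'a dual_num"
  proof (intro sum.neutral ballI)
    fix j
    assume j: "j \<in> {1..<i}"
    have "2 \<le> p ^ j"
      using prime_ge_2_nat[OF \<open>prime p\<close>] self_le_power[of p j] j by simp
    then show "a (i - j) ^ p ^ j * b j = 0"
      using that[of j] j dual_re_eq_0_power[of "a (i - j)"] by auto
  qed
  have "(\<Sum>j\<in>{1..<i}. h (i - j) ^ p ^ j * g j) = 0" "(\<Sum>j\<in>{1..<i}. g (i - j) ^ p ^ j * h j) = 0"
    using assms(7,8) by (blast intro: middle_eq_0)+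
  then have "pcomp p h g i - pcomp p g h i = 0"
    unfolding pcomp_diff_commute[of p i h g, OF assms(2-5)] assms(6) by simp
  then show ?thesis
    by simp
qed

lemma dual_re_pcomp_commuteI:
  fixes h g :: "nat \<Rightarrow> 'a::ring_1 dual_num"
  assumes "prime p" and "of_nat p = (0 :: 'a)" and "0 < i" and "h 0 = 1" and "dual_re (g 0) = 1"
    and "\<And>j. 1 \<le> j \<Longrightarrow> j < i \<Longrightarrow> dual_re (h (i - j)) = 0 \<or> dual_re (g j) = 0"
    and "\<And>j. 1 \<le> j \<Longrightarrow> j < i \<Longrightarrow> dual_re (g (i - j)) = 0 \<or> dual_re (h j) = 0"
  shows "dual_re (pcomp p h g i) = dual_re (pcomp p g h i)"
proof -
  have middle_eq_0: "dual_re (\<Sum>j\<in>{1..<i}. a (i - j) ^ p ^ j * b j) = 0"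
    if "\<And>j. 1 \<le> j \<Longrightarrow> j < i \<Longrightarrow> dual_re (a (i - j)) = 0 \<or> dual_re (b j) = 0"
    for a b :: "nat \<Rightarrow> 'a dual_num"
    unfolding dual_re_sum
  proof (intro sum.neutral ballI)
    fix j
    assume j: "j \<in> {1..<i}"
    have "0 < p ^ j"
      using prime_gt_0_nat[OF \<open>prime p\<close>] by simp
    then show "dual_re (a (i - j) ^ p ^ j * b j) = 0"
      using that[of j] j by (auto simp: power_0_left)
  qed
  have "dual_re (h i * (g 0 - 1)) = 0"
    using \<open>dual_re (g 0) = 1\<close> by simp
  moreover have "dual_re (\<Sum>j\<in>{1..<i}. h (i - j) ^ p ^ j * g j) = 0"
    "dual_re (\<Sum>j\<in>{1..<i}. g (i - j) ^ p ^ j * h j) = 0"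
    using assms(6,7) by (blast intro: middle_eq_0)+
  ultimately have "dual_re (pcomp p h g i - pcomp p g h i) = 0"
    unfolding pcomp_diff_commute[of p i h g, OF assms(2-5)] dual_re_diff dual_re_add by simp
  then show ?thesis
    by simp
qed

definition trivial_upto :: "nat \<Rightarrow> (nat \<Rightarrow> 'b::{zero,one}) \<Rightarrow> bool" where
  "trivial_upto k a \<longleftrightarrow> a 0 = 1 \<and> (\<forall>i\<in>{1..k}. a i = 0)"

lemma trivial_upto_eq: "trivial_upto k a \<Longrightarrow> trivial_upto k b \<Longrightarrow> i \<le> k \<Longrightarrow> a i = b i"
  by (cases "i = 0") (auto simp: trivial_upto_def)

lemma dual_re_pcomp_1_commute:
  fixes h g :: "nat \<Rightarrow> 'a::ring_1 dual_num"
  assumes "dual_re (h 0) = 1" and "dual_re (g 0) = 1"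
  shows "dual_re (pcomp p h g 1) = dual_re (pcomp p g h 1)"
  using assms by (simp add: pcomp_split add.commute)

lemma pcomp_commute_upto_2_of_half:
  fixes h g :: "nat \<Rightarrow> 'a::ring_1 dual_num"
  assumes "prime p" and "of_nat p = (0 :: 'a)"
    and "trivial_upto 0 h" "dual_re (h 1) = 0" and "trivial_upto 0 g" "dual_re (g 1) = 0"
    and "i \<le> 2"
  shows "pcomp p h g i = pcomp p g h i"
proof (cases "i = 0")
  case False
  have "j = 1 \<and> i - j = 1" if "1 \<le> j" "j < i" for j
    using that \<open>i \<le> 2\<close> by auto
  then show ?thesis
    using assms False by (intro pcomp_commuteI) (auto simp: trivial_upto_def)
qed (simp add: pcomp_commute_0)

lemma pcomp_commute_upto_add_2:
  fixes h g :: "nat \<Rightarrow> 'a::ring_1 dual_num"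
  assumes "prime p" and "of_nat p = (0 :: 'a)" and "1 \<le> k"
    and "trivial_upto k h" and "trivial_upto k g" and "i \<le> k + 2"
  shows "pcomp p h g i = pcomp p g h i"
proof (cases "i = 0")
  case False
  have "dual_re (h (i - j)) = 0 \<or> g j = 0" "dual_re (g (i - j)) = 0 \<or> h j = 0"
    if "1 \<le> j" "j < i" for j
  proof -
    have "j \<in> {1..k} \<or> i - j \<in> {1..k}"
      using that assms(3,6) by auto
    then show "dual_re (h (i - j)) = 0 \<or> g j = 0" "dual_re (g (i - j)) = 0 \<or> h j = 0"
      using assms(4,5) by (auto simp: trivial_upto_def)
  qed
  then show ?thesis
    using assms False by (intro pcomp_commuteI) (auto simp: trivial_upto_def)
qed (simp add: pcomp_commute_0)

lemma pcomp_commute_of_trivial_upto: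
  fixes h g :: "nat \<Rightarrow> 'a::ring_1 dual_num"
  assumes "prime p" and "of_nat p = (0 :: 'a)" and "trivial_upto k h" and "dual_re (g 0) = 1"
  shows "i \<le> k \<Longrightarrow> pcomp p h g i = pcomp p g h i"
    and "dual_re (pcomp p h g (k + 1)) = dual_re (pcomp p g h (k + 1))"
proof -
  have h: "h 0 = 1" "\<And>j. 1 \<le> j \<Longrightarrow> j \<le> k \<Longrightarrow> h j = 0"
    using \<open>trivial_upto k h\<close> by (auto simp: trivial_upto_def)
  show "pcomp p h g i = pcomp p g h i" if "i \<le> k"
  proof (cases "i = 0")
    case False
    then show ?thesis
      using assms(1,2,4) h that by (intro pcomp_commuteI) auto
  qed (simp add: pcomp_commute_0)
  show "dual_re (pcomp p h g (k + 1)) = dual_re (pcomp p g h (k + 1))"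
    using assms(1,2,4) h by (intro dual_re_pcomp_commuteI) auto
qed

lemma pcomp_commute_of_trivial_upto_half:
  fixes h g :: "nat \<Rightarrow> 'a::ring_1 dual_num"
  assumes "prime p" and "of_nat p = (0 :: 'a)" and "trivial_upto k h" and "dual_re (h (k + 1)) = 0"
    and "dual_re (g 0) = 1"
  shows "i \<le> k + 1 \<Longrightarrow> pcomp p h g i = pcomp p g h i"
    and "dual_re (pcomp p h g (k + 2)) = dual_re (pcomp p g h (k + 2))"
proof -
  have h: "h 0 = 1" "\<And>j. 1 \<le> j \<Longrightarrow> j \<le> k \<Longrightarrow> h j = 0"
    using \<open>trivial_upto k h\<close> by (auto simp: trivial_upto_def)
  have h_re: "dual_re (h j) = 0" if "1 \<le> j" "j \<le> k + 1" for j
    using h(2)[of j] assms(4) that by (cases "j = k + 1") auto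
  show "pcomp p h g i = pcomp p g h i" if "i \<le> k + 1"
  proof (cases "i = k + 1")
    case True
    have "h (k + 1) * (g 0 - 1) = 0"
      using assms(4,5) by (intro dual_re_eq_0_mult) simp_all
    then show ?thesis
      using assms(1,2,5) h True by (intro pcomp_commuteI) auto
  qed (use pcomp_commute_of_trivial_upto(1)[of p k h g, OF assms(1-3,5)] that in simp)
  show "dual_re (pcomp p h g (k + 2)) = dual_re (pcomp p g h (k + 2))"
    using assms(1,2,5) h(1) h_re by (intro dual_re_pcomp_commuteI) auto
qed

lemma pcomp_of_trivial_upto:
  fixes a b :: "nat \<Rightarrow> 'a::ring_1 dual_num"
  assumes "of_nat p = (0 :: 'a)" and "dual_re (a 0) = 1" and "trivial_upto (i - 1) b" and "0 < i"
  shows "pcomp p a b i = a i + b i"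
proof -
  have "(\<Sum>j\<in>{1..<i}. a (i - j) ^ p ^ j * b j) = 0"
    using \<open>trivial_upto (i - 1) b\<close> by (intro sum.neutral) (auto simp: trivial_upto_def)
  then show ?thesis
    using pcomp_split[OF \<open>0 < i\<close>, of p a b] dual_power_char_eq_1[OF assms(2,1,4)] assms(3)
    by (simp add: trivial_upto_def)
qed

lemma trivial_upto_of_pcomp_agree:
  fixes x u :: "nat \<Rightarrow> 'a::ring_1 dual_num"
  assumes "prime p" and "of_nat p = (0 :: 'a)" and "dual_re (x 0) = 1"
    and agree: "\<And>i. i \<le> k \<Longrightarrow> pcomp p x u i = x i"
  shows "trivial_upto k u"
    and "dual_re (pcomp p x u (k + 1)) = dual_re (x (k + 1)) \<Longrightarrow> dual_re (u (k + 1)) = 0"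
proof -
  have "u 0 = x 0 ^ (p - 1) * (x 0 * u 0)"
    using dual_unit_of_re_1[OF assms(1-3)] by (simp flip: mult.assoc)
  then have u0: "u 0 = 1"
    using agree[of 0] dual_unit_of_re_1[OF assms(1-3)] by simp
  have "u i = 0" if "1 \<le> i" "i \<le> k" for i
    using that
  proof (induction i rule: less_induct)
    case (less i)
    then have "trivial_upto (i - 1) u"
      using u0 by (auto simp: trivial_upto_def)
    then show ?case
      using pcomp_of_trivial_upto[of p x i u, OF assms(2,3)] agree[of i] less.prems by simp
  qed
  then show "trivial_upto k u"
    using u0 by (simp add: trivial_upto_def)
  then have "trivial_upto (k + 1 - 1) u"
    by simp
  then show "dual_re (u (k + 1)) = 0" if "dual_re (pcomp p x u (k + 1)) = dual_re (x (k + 1))"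
    using pcomp_of_trivial_upto[of p x "k + 1" u, OF assms(2,3)] that by simp
qed

section \<open>The group \<open>G_p(A_*)\<close> and its filtration\<close>

definition dual_seq :: "(nat \<Rightarrow> 'a \<times> 'a) \<Rightarrow> nat \<Rightarrow> 'a::ring_1 dual_num" where
  "dual_seq \<alpha> i = Dual (\<alpha> i)"

lemma dual_seq_dual_pair: "dual_seq (\<lambda>i. dual_pair (a i)) = a"
  by (rule ext) (simp add: dual_seq_def dual_pair_inverse)

lemma dual_seq_Gone: "dual_seq Gone = pcomp_one"
  by (auto simp: dual_seq_def Gone_def pcomp_one_def one_dual_num_def zero_dual_num_def)

lemma hdeg_0 [simp]: "hdeg p 0 = 0"
  by (simp add: hdeg_def)

lemma even_hdeg: "even (hdeg p i) \<or> p = 2"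
  by (simp add: hdeg_def)

lemma hdeg_add: "j \<le> i \<Longrightarrow> int p ^ j * hdeg p (i - j) + hdeg p j = hdeg p i"
  by (auto simp: hdeg_def algebra_simps simp flip: power_add)

lemma (in group) subgroup_of_inv_mult_closed:
  assumes "H \<subseteq> carrier G" and "\<one> \<in> H" and "\<And>a b. a \<in> H \<Longrightarrow> b \<in> H \<Longrightarrow> inv a \<otimes> b \<in> H"
  shows "subgroup H G"
proof (rule subgroupI)
  show inv_closed: "inv a \<in> H" if "a \<in> H" for a
    using assms(3)[OF that assms(2)] that assms(1) by auto
  show "a \<otimes> b \<in> H" if "a \<in> H" "b \<in> H" for a b
    using assms(3)[OF inv_closed[OF that(1)] that(2)] that(1) assms(1) by auto
qed (use assms in auto)

locale graded_Fp_algebra =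
  fixes p :: nat and A :: "int \<Rightarrow> 'a::ring_1 set"
  assumes prime: "prime p" and graded: "graded_comm_Fp_alg p A"
begin

lemma char_p: "of_nat p = (0 :: 'a)"
  using graded[unfolded graded_comm_Fp_alg_def] by (elim conjE)

lemma A_one: "1 \<in> A 0"
  using graded[unfolded graded_comm_Fp_alg_def] by (elim conjE)

lemma A_zero: "0 \<in> A n"
  and A_add: "x \<in> A n \<Longrightarrow> y \<in> A n \<Longrightarrow> x + y \<in> A n"
  and A_uminus: "x \<in> A n \<Longrightarrow> - x \<in> A n"
proof -
  have "\<forall>n. 0 \<in> A n \<and> (\<forall>x\<in>A n. \<forall>y\<in>A n. x + y \<in> A n) \<and> (\<forall>x\<in>A n. - x \<in> A n)"
    using graded[unfolded graded_comm_Fp_alg_def] by (elim conjE)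
  then show "0 \<in> A n" "x \<in> A n \<Longrightarrow> y \<in> A n \<Longrightarrow> x + y \<in> A n" "x \<in> A n \<Longrightarrow> - x \<in> A n"
    by blast+
qed

lemma A_mult: "x \<in> A m \<Longrightarrow> y \<in> A n \<Longrightarrow> x * y \<in> A (m + n)"
proof -
  have "\<forall>m n. \<forall>x\<in>A m. \<forall>y\<in>A n. x * y \<in> A (m + n)"
    using graded[unfolded graded_comm_Fp_alg_def] by (elim conjE)
  then show "x \<in> A m \<Longrightarrow> y \<in> A n \<Longrightarrow> x * y \<in> A (m + n)"
    by blast
qed

lemma A_sign:
  assumes "x \<in> A m" and "y \<in> A n"
  shows "x * y = (if even (m * n) then y * x else - (y * x))"
proof -
  have "\<forall>m n. \<forall>x\<in>A m. \<forall>y\<in>A n. x * y = (if even (m * n) then y * x else - (y * x))"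
    using graded[unfolded graded_comm_Fp_alg_def] by (elim conjE)
  then show ?thesis
    using assms by blast
qed

lemma A_decomp: "\<exists>F f. finite F \<and> (\<forall>n\<in>F. f n \<in> A n) \<and> z = sum f F"
  using graded[unfolded graded_comm_Fp_alg_def] by (elim conjE) fast

lemma central_of_even_degree:
  assumes "x \<in> A m" and "even m \<or> p = 2"
  shows "central x"
  unfolding central_def
proof
  fix y
  obtain F f where F: "finite F" "\<forall>n\<in>F. f n \<in> A n" and y: "y = sum f F"
    using A_decomp by blast
  have "x * f n = f n * x" if "n \<in> F" for n
  proof (cases "p = 2")
    case True
    then have "CHAR('a) = 2"
      using CHAR_eq_prime[OF prime char_p] by simp
    then show ?thesis
      using A_sign[OF assms(1), of "f n" n] F that uminus_CHAR_2 by auto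
  qed (use A_sign[OF assms(1), of "f n" n] F that assms(2) in auto)
  then show "x * y = y * x"
    unfolding y by (simp add: sum_distrib_left sum_distrib_right)
qed

definition homog :: "int \<Rightarrow> 'a dual_num \<Rightarrow> bool" where
  "homog d x \<longleftrightarrow> ext_hom p A d (dual_pair x)"

lemma homog_0: "homog d 0"
  and homog_1: "homog 0 1"
  by (simp_all add: homog_def ext_hom_def dual_pair_0 dual_pair_1 A_zero A_one)

lemma homog_add: "homog d x \<Longrightarrow> homog d y \<Longrightarrow> homog d (x + y)"
  and homog_uminus: "homog d x \<Longrightarrow> homog d (- x)"
  by (auto simp: homog_def ext_hom_def dual_pair_add dual_pair_uminus A_add A_uminus
      split: if_splits)

lemma homog_mult:
  assumes "homog d x" and "homog e y"
  shows "homog (d + e) (x * y)"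
proof -
  have re: "dual_re x \<in> A d" "dual_re y \<in> A e"
    using assms by (simp_all add: homog_def ext_hom_def dual_re_def)
  have "snd (dual_pair (x * y)) = 0" if "p = 2"
    using assms that unfolding homog_def ext_hom_def by (simp add: dual_pair_mult)
  moreover have "snd (dual_pair (x * y)) \<in> A (d + e + 1)" if "p \<noteq> 2"
  proof -
    have "snd (dual_pair x) \<in> A (d + 1)" "snd (dual_pair y) \<in> A (e + 1)"
      using assms that unfolding homog_def ext_hom_def by simp_all
    then have "dual_re x * snd (dual_pair y) \<in> A (d + e + 1)"
      "snd (dual_pair x) * dual_re y \<in> A (d + e + 1)"
      using A_mult[OF re(1)] A_mult[OF _ re(2)] by (fastforce simp: ac_simps)+
    then show ?thesis
      by (simp add: dual_pair_mult A_add)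
  qed
  ultimately show ?thesis
    using A_mult[OF re] by (simp add: homog_def ext_hom_def dual_re_def[symmetric])
qed

lemma homog_sum: "(\<And>i. i \<in> S \<Longrightarrow> homog d (f i)) \<Longrightarrow> homog d (sum f S)"
  by (induction S rule: infinite_finite_induct) (simp_all add: homog_0 homog_add)

lemma homog_power: "homog d x \<Longrightarrow> homog (int n * d) (x ^ n)"
  by (induction n) (simp_all add: homog_1 homog_mult[of d x, simplified] algebra_simps)

lemma homog_pcomp:
  assumes "\<And>i. homog (hdeg p i) (a i)" and "\<And>i. homog (hdeg p i) (b i)"
  shows "homog (hdeg p i) (pcomp p a b i)"
  unfolding pcomp_def
proof (rule homog_sum)
  fix j
  assume "j \<in> {..i}"
  then have "homog (int (p ^ j) * hdeg p (i - j) + hdeg p j) (a (i - j) ^ p ^ j * b j)"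
    using assms by (intro homog_mult homog_power)
  then show "homog (hdeg p i) (a (i - j) ^ p ^ j * b j)"
    using hdeg_add[of j i p] \<open>j \<in> {..i}\<close> by simp
qed

lemma homog_pcomp_linv:
  assumes "\<And>i. homog (hdeg p i) (a i)" and "homog 0 u"
  shows "homog (hdeg p i) (pcomp_linv p u a i)"
proof (induction i rule: less_induct)
  case (less i)
  show ?case
  proof (cases i)
    case (Suc n)
    have "homog (hdeg p i) (pcomp_linv p u a (i - j) ^ p ^ j * a j)" if "j \<in> {1..i}" for j
    proof -
      have "homog (hdeg p (i - j)) (pcomp_linv p u a (i - j))"
        using that by (intro less) auto
      then have "homog (int (p ^ j) * hdeg p (i - j) + hdeg p j) (pcomp_linv p u a (i - j) ^ p ^ j * a j)"
        by (intro homog_mult homog_power assms(1))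
      then show ?thesis
        using hdeg_add[of j i p] that by simp
    qed
    then have "homog (hdeg p i + 0) (- (\<Sum>j\<in>{1..i}. pcomp_linv p u a (i - j) ^ p ^ j * a j) * u)"
      by (intro homog_mult homog_uminus homog_sum assms(2))
    then show ?thesis
      using Suc by simp
  qed (simp add: assms)
qed

text \<open>The Koszul sign of \<^const>\<open>eps_mult\<close> only appears for odd degrees of the right factor, and there
  it is trivial in characteristic 2.\<close>
lemma eps_mult_eq_dual_mult:
  fixes x y :: "'a \<times> 'a"
  assumes "central (fst x)" and "central (fst y)" and "even e \<or> p = 2"
  shows "eps_mult e x y = dual_pair (Dual x * Dual y)"
proof -
  have "(if even e then snd x * fst y else - (snd x * fst y)) = snd x * fst y"
    using assms(3) uminus_CHAR_2[of "snd x * fst y"] CHAR_eq_prime[OF prime char_p] by auto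
  then show ?thesis
    using assms(1,2) by (simp add: eps_mult_def dual_pair_mult dual_re_def dual_pair_Dual)
qed

lemma eps_pow_eq_dual_power:
  fixes x :: "'a \<times> 'a"
  assumes "central (fst x)" and "even e \<or> p = 2"
  shows "eps_pow e x n = dual_pair (Dual x ^ n)"
proof (induction n)
  case (Suc n)
  then show ?case
    using assms central_dual_re[of "Dual x ^ n"]
    by (simp add: eps_mult_eq_dual_mult dual_re_def dual_pair_inverse dual_pair_Dual mult.commute)
qed (simp add: dual_pair_1)

lemma Gcarrier_central: "\<alpha> \<in> Gcarrier p A \<Longrightarrow> central (fst (\<alpha> i))"
  using even_hdeg by (intro central_of_even_degree) (auto simp: Gcarrier_def ext_hom_def)

lemma dual_pair_dual_seq: "\<alpha> \<in> Gcarrier p A \<Longrightarrow> dual_pair (dual_seq \<alpha> i) = \<alpha> i"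
  by (simp add: dual_seq_def dual_pair_Dual Gcarrier_central)

lemma homog_dual_seq: "\<alpha> \<in> Gcarrier p A \<Longrightarrow> homog (hdeg p i) (dual_seq \<alpha> i)"
  by (simp add: homog_def dual_pair_dual_seq) (simp add: Gcarrier_def)

lemma dual_re_dual_seq_0: "\<alpha> \<in> Gcarrier p A \<Longrightarrow> dual_re (dual_seq \<alpha> 0) = 1"
  by (simp add: dual_re_def dual_pair_dual_seq) (simp add: Gcarrier_def)

lemma Gcarrier_eqI: "\<alpha> \<in> Gcarrier p A \<Longrightarrow> \<beta> \<in> Gcarrier p A \<Longrightarrow> dual_seq \<alpha> = dual_seq \<beta> \<Longrightarrow> \<alpha> = \<beta>"
  by (metis dual_pair_dual_seq ext)

lemma dual_pair_in_Gcarrier: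
  assumes "\<And>i. homog (hdeg p i) (a i)" and "dual_re (a 0) = 1"
  shows "(\<lambda>i. dual_pair (a i)) \<in> Gcarrier p A"
  using assms by (simp add: Gcarrier_def homog_def dual_re_def)

lemma Gmult_eq_pcomp:
  assumes "\<alpha> \<in> Gcarrier p A" and "\<beta> \<in> Gcarrier p A"
  shows "Gmult p \<alpha> \<beta> = (\<lambda>i. dual_pair (pcomp p (dual_seq \<alpha>) (dual_seq \<beta>) i))"
proof
  fix i
  have "eps_mult (hdeg p j) (eps_pow (hdeg p (i - j)) (\<alpha> (i - j)) (p ^ j)) (\<beta> j)
      = dual_pair (dual_seq \<alpha> (i - j) ^ p ^ j * dual_seq \<beta> j)" for j
  proof -
    have "eps_pow (hdeg p (i - j)) (\<alpha> (i - j)) (p ^ j) = dual_pair (dual_seq \<alpha> (i - j) ^ p ^ j)"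
      unfolding dual_seq_def using assms(1) Gcarrier_central even_hdeg
      by (intro eps_pow_eq_dual_power)
    moreover have "central (fst (dual_pair (dual_seq \<alpha> (i - j) ^ p ^ j)))"
      using central_dual_re by (simp add: dual_re_def)
    ultimately show ?thesis
      using assms(2) Gcarrier_central even_hdeg
      by (simp add: eps_mult_eq_dual_mult dual_pair_inverse dual_seq_def)
  qed
  then show "Gmult p \<alpha> \<beta> i = dual_pair (pcomp p (dual_seq \<alpha>) (dual_seq \<beta>) i)"
    by (simp add: Gmult_def pcomp_def dual_pair_sum)
qed

lemma dual_seq_Gmult:
  "\<alpha> \<in> Gcarrier p A \<Longrightarrow> \<beta> \<in> Gcarrier p A \<Longrightarrow> dual_seq (Gmult p \<alpha> \<beta>) = pcomp p (dual_seq \<alpha>) (dual_seq \<beta>)"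
  by (simp add: Gmult_eq_pcomp dual_seq_dual_pair)

lemma Gmult_closed: "\<alpha> \<in> Gcarrier p A \<Longrightarrow> \<beta> \<in> Gcarrier p A \<Longrightarrow> Gmult p \<alpha> \<beta> \<in> Gcarrier p A"
  unfolding Gmult_eq_pcomp
  by (intro dual_pair_in_Gcarrier homog_pcomp homog_dual_seq) (simp_all add: dual_re_dual_seq_0)

lemma Gone_in_Gcarrier: "Gone \<in> Gcarrier p A"
  by (simp add: Gcarrier_def Gone_def ext_hom_def A_zero A_one)

lemma Gp_simps: "carrier (Gp p A) = Gcarrier p A" "x \<otimes>\<^bsub>Gp p A\<^esub> y = Gmult p x y" "\<one>\<^bsub>Gp p A\<^esub> = Gone"
  by (simp_all add: Gp_def)

lemma group_Gp: "group (Gp p A)"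
proof (rule groupI, unfold Gp_simps)
  fix \<alpha> \<beta> \<gamma>
  assume \<alpha>: "\<alpha> \<in> Gcarrier p A" and \<beta>: "\<beta> \<in> Gcarrier p A" and \<gamma>: "\<gamma> \<in> Gcarrier p A"
  show "Gmult p (Gmult p \<alpha> \<beta>) \<gamma> = Gmult p \<alpha> (Gmult p \<beta> \<gamma>)"
    using \<alpha> \<beta> \<gamma> CHAR_eq_prime[OF prime char_p]
    by (intro Gcarrier_eqI Gmult_closed)
      (simp_all add: dual_seq_Gmult Gmult_closed pcomp_assoc[OF prime])
next
  fix \<alpha>
  assume \<alpha>: "\<alpha> \<in> Gcarrier p A"
  show "Gmult p Gone \<alpha> = \<alpha>"
    using \<alpha> Gone_in_Gcarrier prime_gt_0_nat[OF prime]
    by (intro Gcarrier_eqI Gmult_closed) (simp_all add: dual_seq_Gmult dual_seq_Gone pcomp_one_left)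
  define u where "u = dual_seq \<alpha> 0 ^ (p - 1)"
  define \<beta> where "\<beta> = (\<lambda>i. dual_pair (pcomp_linv p u (dual_seq \<alpha>) i))"
  have \<beta>: "\<beta> \<in> Gcarrier p A"
    unfolding \<beta>_def u_def
    using dual_re_dual_seq_0[OF \<alpha>] homog_power[OF homog_dual_seq[OF \<alpha>, of 0]]
    by (intro dual_pair_in_Gcarrier homog_pcomp_linv homog_dual_seq[OF \<alpha>]) simp_all
  have "Gmult p \<beta> \<alpha> = Gone"
    using \<alpha> \<beta> dual_unit_of_re_1[OF prime char_p dual_re_dual_seq_0[OF \<alpha>]]
    by (intro Gcarrier_eqI Gmult_closed Gone_in_Gcarrier)
      (simp_all add: dual_seq_Gmult dual_seq_Gone \<beta>_def u_def dual_seq_dual_pair pcomp_pcomp_linv)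
  then show "\<exists>\<beta>\<in>Gcarrier p A. Gmult p \<beta> \<alpha> = Gone"
    using \<beta> by blast
qed (simp_all add: Gmult_closed Gone_in_Gcarrier)

lemma Gsub_iff: "\<alpha> \<in> Gsub p A k \<longleftrightarrow> \<alpha> \<in> Gcarrier p A \<and> trivial_upto k (dual_seq \<alpha>)"
proof -
  have "\<alpha> i = dual_pair c \<longleftrightarrow> dual_seq \<alpha> i = c" if "\<alpha> \<in> Gcarrier p A" for i c
    using that by (metis dual_pair_dual_seq dual_pair_inject)
  from this[of _ 0] this[of _ 1] show ?thesis
    by (auto simp: Gsub_def trivial_upto_def dual_pair_0 dual_pair_1)
qed

lemma Gsub_subset: "Gsub p A k \<subseteq> Gcarrier p A"
  and Gsub_half_subset: "Gsub_half p A k \<subseteq> Gcarrier p A"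
  by (auto simp: Gsub_half_def Gsub_def)

lemma Gsub_half_iff: "\<alpha> \<in> Gsub_half p A k \<longleftrightarrow> \<alpha> \<in> Gsub p A k \<and> dual_re (dual_seq \<alpha> (k + 1)) = 0"
  by (auto simp: Gsub_half_def Gsub_def dual_re_def dual_pair_dual_seq)

lemma inv_mult_in_Gsub:
  assumes \<alpha>: "\<alpha> \<in> Gcarrier p A" and \<beta>: "\<beta> \<in> Gcarrier p A"
    and agree: "\<And>i. i \<le> k \<Longrightarrow> dual_seq \<alpha> i = dual_seq \<beta> i"
  shows "inv\<^bsub>Gp p A\<^esub> \<alpha> \<otimes>\<^bsub>Gp p A\<^esub> \<beta> \<in> Gsub p A k"
    and "dual_re (dual_seq \<alpha> (k + 1)) = dual_re (dual_seq \<beta> (k + 1)) \<Longrightarrow>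
      inv\<^bsub>Gp p A\<^esub> \<alpha> \<otimes>\<^bsub>Gp p A\<^esub> \<beta> \<in> Gsub_half p A k"
proof -
  interpret G: group "Gp p A"
    by (rule group_Gp)
  define \<gamma> where "\<gamma> = inv\<^bsub>Gp p A\<^esub> \<alpha> \<otimes>\<^bsub>Gp p A\<^esub> \<beta>"
  have \<gamma>: "\<gamma> \<in> Gcarrier p A" and "Gmult p \<alpha> \<gamma> = \<beta>"
    using \<alpha> \<beta> by (simp_all add: \<gamma>_def G.m_assoc[symmetric] flip: Gp_simps)
  then have seq: "pcomp p (dual_seq \<alpha>) (dual_seq \<gamma>) = dual_seq \<beta>"
    using \<alpha> by (simp flip: dual_seq_Gmult)
  have "pcomp p (dual_seq \<alpha>) (dual_seq \<gamma>) i = dual_seq \<alpha> i" if "i \<le> k" for i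
    using agree[OF that] by (simp add: seq)
  note agreement = trivial_upto_of_pcomp_agree[where x = "dual_seq \<alpha>" and u = "dual_seq \<gamma>",
      OF prime char_p dual_re_dual_seq_0[OF \<alpha>] this]
  show "\<gamma> \<in> Gsub p A k"
    using agreement(1) \<gamma> by (simp add: Gsub_iff)
  show "\<gamma> \<in> Gsub_half p A k" if "dual_re (dual_seq \<alpha> (k + 1)) = dual_re (dual_seq \<beta> (k + 1))"
    using agreement \<gamma> that by (simp add: seq Gsub_iff Gsub_half_iff)
qed

lemma subgroup_Gsub: "subgroup (Gsub p A k) (Gp p A)"
proof (rule group.subgroup_of_inv_mult_closed[OF group_Gp])
  show "Gsub p A k \<subseteq> carrier (Gp p A)"
    by (auto simp: Gsub_def Gp_simps)
  show "\<one>\<^bsub>Gp p A\<^esub> \<in> Gsub p A k"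
    using Gone_in_Gcarrier by (simp add: Gp_simps Gsub_iff dual_seq_Gone trivial_upto_def pcomp_one_def)
  show "inv\<^bsub>Gp p A\<^esub> \<alpha> \<otimes>\<^bsub>Gp p A\<^esub> \<beta> \<in> Gsub p A k" if "\<alpha> \<in> Gsub p A k" "\<beta> \<in> Gsub p A k" for \<alpha> \<beta>
    using that by (intro inv_mult_in_Gsub) (auto simp: Gsub_iff intro: trivial_upto_eq)
qed

lemma subgroup_Gsub_half: "subgroup (Gsub_half p A k) (Gp p A)"
proof (rule group.subgroup_of_inv_mult_closed[OF group_Gp])
  show "Gsub_half p A k \<subseteq> carrier (Gp p A)"
    by (auto simp: Gsub_half_def Gsub_def Gp_simps)
  show "\<one>\<^bsub>Gp p A\<^esub> \<in> Gsub_half p A k"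
    using Gone_in_Gcarrier
    by (simp add: Gp_simps Gsub_half_iff Gsub_iff dual_seq_Gone trivial_upto_def pcomp_one_def)
  show "inv\<^bsub>Gp p A\<^esub> \<alpha> \<otimes>\<^bsub>Gp p A\<^esub> \<beta> \<in> Gsub_half p A k"
    if "\<alpha> \<in> Gsub_half p A k" "\<beta> \<in> Gsub_half p A k" for \<alpha> \<beta>
    using that by (intro inv_mult_in_Gsub) (auto simp: Gsub_half_iff Gsub_iff intro: trivial_upto_eq)
qed

lemma commutator_in_Gsub:
  assumes h: "h \<in> Gcarrier p A" and g: "g \<in> Gcarrier p A"
    and agree: "\<And>i. i \<le> k \<Longrightarrow> pcomp p (dual_seq h) (dual_seq g) i = pcomp p (dual_seq g) (dual_seq h) i"
  shows "inv\<^bsub>Gp p A\<^esub> h \<otimes>\<^bsub>Gp p A\<^esub> inv\<^bsub>Gp p A\<^esub> g \<otimes>\<^bsub>Gp p A\<^esub> h \<otimes>\<^bsub>Gp p A\<^esub> g \<in> Gsub p A k"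
    and "dual_re (pcomp p (dual_seq h) (dual_seq g) (k + 1))
        = dual_re (pcomp p (dual_seq g) (dual_seq h) (k + 1)) \<Longrightarrow>
      inv\<^bsub>Gp p A\<^esub> h \<otimes>\<^bsub>Gp p A\<^esub> inv\<^bsub>Gp p A\<^esub> g \<otimes>\<^bsub>Gp p A\<^esub> h \<otimes>\<^bsub>Gp p A\<^esub> g \<in> Gsub_half p A k"
proof -
  interpret G: group "Gp p A"
    by (rule group_Gp)
  have "inv\<^bsub>Gp p A\<^esub> h \<otimes>\<^bsub>Gp p A\<^esub> inv\<^bsub>Gp p A\<^esub> g \<otimes>\<^bsub>Gp p A\<^esub> h \<otimes>\<^bsub>Gp p A\<^esub> g
      = inv\<^bsub>Gp p A\<^esub> (Gmult p g h) \<otimes>\<^bsub>Gp p A\<^esub> Gmult p h g"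
    using h g by (simp add: G.inv_mult_group G.m_assoc flip: Gp_simps)
  moreover have "Gmult p g h \<in> Gcarrier p A" "Gmult p h g \<in> Gcarrier p A"
    using h g by (simp_all add: Gmult_closed)
  ultimately show "inv\<^bsub>Gp p A\<^esub> h \<otimes>\<^bsub>Gp p A\<^esub> inv\<^bsub>Gp p A\<^esub> g \<otimes>\<^bsub>Gp p A\<^esub> h \<otimes>\<^bsub>Gp p A\<^esub> g \<in> Gsub p A k"
    and "dual_re (pcomp p (dual_seq h) (dual_seq g) (k + 1))
        = dual_re (pcomp p (dual_seq g) (dual_seq h) (k + 1)) \<Longrightarrow>
      inv\<^bsub>Gp p A\<^esub> h \<otimes>\<^bsub>Gp p A\<^esub> inv\<^bsub>Gp p A\<^esub> g \<otimes>\<^bsub>Gp p A\<^esub> h \<otimes>\<^bsub>Gp p A\<^esub> g \<in> Gsub_half p A k"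
    using inv_mult_in_Gsub[of "Gmult p g h" "Gmult p h g" k] h g agree
    by (simp_all add: dual_seq_Gmult)
qed

lemma comm_subgroup_subset:
  assumes "subgroup T (Gp p A)" and "H \<subseteq> Gcarrier p A" and "K \<subseteq> Gcarrier p A"
    and "\<And>h g. h \<in> H \<Longrightarrow> g \<in> K \<Longrightarrow>
      inv\<^bsub>Gp p A\<^esub> h \<otimes>\<^bsub>Gp p A\<^esub> inv\<^bsub>Gp p A\<^esub> g \<otimes>\<^bsub>Gp p A\<^esub> h \<otimes>\<^bsub>Gp p A\<^esub> g \<in> T"
  shows "comm_subgroup (Gp p A) H K \<subseteq> T"
  unfolding comm_subgroup_def using assms
  by (intro group.generate_subgroup_incl[OF group_Gp]) blast+

lemma comm_subgroup_subset_Gsub: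
  assumes "H \<subseteq> Gcarrier p A" and "K \<subseteq> Gcarrier p A"
    and "\<And>h g i. h \<in> H \<Longrightarrow> g \<in> K \<Longrightarrow> i \<le> k \<Longrightarrow>
      pcomp p (dual_seq h) (dual_seq g) i = pcomp p (dual_seq g) (dual_seq h) i"
  shows "comm_subgroup (Gp p A) H K \<subseteq> Gsub p A k"
  using assms by (intro comm_subgroup_subset subgroup_Gsub commutator_in_Gsub(1)) auto

lemma comm_subgroup_subset_Gsub_half:
  assumes "H \<subseteq> Gcarrier p A" and "K \<subseteq> Gcarrier p A"
    and "\<And>h g i. h \<in> H \<Longrightarrow> g \<in> K \<Longrightarrow> i \<le> k \<Longrightarrow>
      pcomp p (dual_seq h) (dual_seq g) i = pcomp p (dual_seq g) (dual_seq h) i"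
    and "\<And>h g. h \<in> H \<Longrightarrow> g \<in> K \<Longrightarrow>
      dual_re (pcomp p (dual_seq h) (dual_seq g) (k + 1)) = dual_re (pcomp p (dual_seq g) (dual_seq h) (k + 1))"
  shows "comm_subgroup (Gp p A) H K \<subseteq> Gsub_half p A k"
  using assms by (intro comm_subgroup_subset subgroup_Gsub_half commutator_in_Gsub(2)) auto

lemma comm_Gcarrier_Gcarrier: "comm_subgroup (Gp p A) (Gcarrier p A) (Gcarrier p A) \<subseteq> Gsub_half p A 0"
proof (rule comm_subgroup_subset_Gsub_half[OF order.refl order.refl])
  fix h g
  assume "h \<in> Gcarrier p A" and "g \<in> Gcarrier p A"
  then show "dual_re (pcomp p (dual_seq h) (dual_seq g) (0 + 1))
      = dual_re (pcomp p (dual_seq g) (dual_seq h) (0 + 1))"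
    using dual_re_pcomp_1_commute[where h = "dual_seq h" and g = "dual_seq g"]
    by (simp add: dual_re_dual_seq_0)
  show "pcomp p (dual_seq h) (dual_seq g) i = pcomp p (dual_seq g) (dual_seq h) i" if "i \<le> 0" for i
    using that pcomp_commute_0 by simp
qed

lemma comm_Gsub_half_0: "comm_subgroup (Gp p A) (Gsub_half p A 0) (Gsub_half p A 0) \<subseteq> Gsub p A 2"
  by (rule comm_subgroup_subset_Gsub[OF Gsub_half_subset Gsub_half_subset];
      rule pcomp_commute_upto_2_of_half[OF prime char_p])
    (simp_all add: Gsub_half_iff Gsub_iff)

lemma comm_Gsub_Gsub: "1 \<le> k \<Longrightarrow> comm_subgroup (Gp p A) (Gsub p A k) (Gsub p A k) \<subseteq> Gsub p A (k + 2)"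
  by (rule comm_subgroup_subset_Gsub[OF Gsub_subset Gsub_subset];
      rule pcomp_commute_upto_add_2[OF prime char_p])
    (simp_all add: Gsub_iff)

lemma comm_Gsub_Gcarrier: "comm_subgroup (Gp p A) (Gsub p A k) (Gcarrier p A) \<subseteq> Gsub_half p A k"
  by (rule comm_subgroup_subset_Gsub_half[OF Gsub_subset order.refl];
      rule pcomp_commute_of_trivial_upto[OF prime char_p])
    (simp_all add: Gsub_iff dual_re_dual_seq_0)

lemma comm_Gsub_half_Gcarrier:
  "comm_subgroup (Gp p A) (Gsub_half p A k) (Gcarrier p A) \<subseteq> Gsub_half p A (k + 1)"
proof (rule comm_subgroup_subset_Gsub_half[OF Gsub_half_subset order.refl])
  fix h g
  assume "h \<in> Gsub_half p A k" and "g \<in> Gcarrier p A"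
  then have "trivial_upto k (dual_seq h)" "dual_re (dual_seq h (k + 1)) = 0"
    "dual_re (dual_seq g 0) = 1"
    by (simp_all add: Gsub_half_iff Gsub_iff dual_re_dual_seq_0)
  note commute = pcomp_commute_of_trivial_upto_half[where h = "dual_seq h" and g = "dual_seq g",
      OF prime char_p this]
  show "pcomp p (dual_seq h) (dual_seq g) i = pcomp p (dual_seq g) (dual_seq h) i" if "i \<le> k + 1"
    for i
    using commute(1)[OF that] .
  show "dual_re (pcomp p (dual_seq h) (dual_seq g) (k + 1 + 1))
      = dual_re (pcomp p (dual_seq g) (dual_seq h) (k + 1 + 1))"
    using commute(2) by (simp add: add.assoc)
qed

end

theorem proposition3p2:
  fixes p :: nat and A :: "int \<Rightarrow> 'a::ring_1 set"
  assumes "prime p" and "graded_comm_Fp_alg p A"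
  shows "comm_subgroup (Gp p A) (Gcarrier p A) (Gcarrier p A) \<subseteq> Gsub_half p A 0
    \<and> comm_subgroup (Gp p A) (Gsub_half p A 0) (Gsub_half p A 0) \<subseteq> Gsub p A 2
    \<and> (\<forall>k\<ge>1. comm_subgroup (Gp p A) (Gsub p A k) (Gsub p A k) \<subseteq> Gsub p A (k + 2))
    \<and> (\<forall>k. comm_subgroup (Gp p A) (Gsub p A k) (Gcarrier p A) \<subseteq> Gsub_half p A k)
    \<and> (\<forall>k. comm_subgroup (Gp p A) (Gsub_half p A k) (Gcarrier p A) \<subseteq> Gsub_half p A (k + 1))"
proof -
  interpret graded_Fp_algebra p A
    using assms by unfold_locales
  show ?thesis
    using comm_Gcarrier_Gcarrier comm_Gsub_half_0 comm_Gsub_Gsub comm_Gsub_Gcarrier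
      comm_Gsub_half_Gcarrier
    by blast
qed

end
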